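(* Let $Z_1,Z_2$ be independent samples from $\mathrm{GUE}(n)$. Then $\mathbb{E}[\gamma(Z_1,Z_2)]\le\sqrt{\pi/n}$.
   Context: $\mathrm{GUE}(n)$ is the distribution of $Z=(G+G^H)/\sqrt2$ where $G$ is $n\times n$ with i.i.d. complex Gaussian entries of mean $0$ and variance $1/n$. For Hermitian $A,B$, $\gamma(A,B)=\min_{\|x\|_2=1}|x^H(A+iB)x|$. *)

theory Defs
  imports "HOL-Probability.Probability"
begin

text \<open>Circularly-symmetric complex Gaussian with mean 0 and variance v = E|g|^2:
  real and imaginary parts are independent real normals with variance v/2.\<close>
definition cgauss :: "real \<Rightarrow> complex measure" where
  "cgauss v = distr (density lborel (normal_density 0 (sqrt (v / 2)))
                       \<Otimes>\<^sub>M density lborel (normal_density 0 (sqrt (v / 2))))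
                    borel (\<lambda>(a, b). Complex a b)"

definition ginibre :: "('n::finite \<times> 'n \<Rightarrow> complex) measure" where
  "ginibre = PiM UNIV (\<lambda>_. cgauss (1 / real CARD('n)))"

definition gue_of :: "('n \<times> 'n \<Rightarrow> complex) \<Rightarrow> 'n \<Rightarrow> 'n \<Rightarrow> complex" where
  "gue_of G i j = (G (i, j) + cnj (G (j, i))) / complex_of_real (sqrt 2)"

definition matrix_space :: "('n \<Rightarrow> 'n \<Rightarrow> complex) measure" where
  "matrix_space = PiM UNIV (\<lambda>_. PiM UNIV (\<lambda>_. borel))"

definition GUE :: "('n::finite \<Rightarrow> 'n \<Rightarrow> complex) measure" where
  "GUE = distr ginibre matrix_space gue_of"

definition gamma_fov :: "('n::finite \<Rightarrow> 'n \<Rightarrow> complex) \<Rightarrow> ('n \<Rightarrow> 'n \<Rightarrow> complex) \<Rightarrow> real" where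
  "gamma_fov A B = (INF x \<in> {x :: 'n \<Rightarrow> complex. sqrt (\<Sum>i\<in>UNIV. (cmod (x i))\<^sup>2) = 1}.
      cmod (\<Sum>i\<in>UNIV. \<Sum>j\<in>UNIV. cnj (x i) * (A i j + \<i> * B i j) * x j))"

end

theory Submission
  imports Defs
begin

text \<open>Testing the numerical range of \<open>Z\<^sub>1 + i Z\<^sub>2\<close> at a standard basis vector \<open>e\<^sub>i\<close> gives
  \<open>\<gamma>(Z\<^sub>1, Z\<^sub>2) \<le> |(Z\<^sub>1)\<^sub>i\<^sub>i + i (Z\<^sub>2)\<^sub>i\<^sub>i|\<close>. The diagonal entries of a GUE matrix are real
  Gaussians of variance \<open>1/n\<close>, so this bound has second moment \<open>2/n\<close>. Integrating
  \<open>u \<le> u\<^sup>2/(2a) + a/2\<close> with \<open>a = sqrt (2/n)\<close> (Cauchy-Schwarz in disguise) bounds its mean by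
  \<open>sqrt (2/n) \<le> sqrt (\<pi>/n)\<close>.\<close>

lemma nn_integral_le_of_second_moment:
  assumes "prob_space M" and f: "f \<in> borel_measurable M" and "0 < a"
    and second_moment: "(\<integral>\<^sup>+ x. ennreal ((f x)\<^sup>2) \<partial>M) \<le> ennreal (a\<^sup>2)"
  shows "(\<integral>\<^sup>+ x. ennreal (f x) \<partial>M) \<le> ennreal a"
proof -
  interpret prob_space M by fact
  have am_gm: "f x \<le> (f x)\<^sup>2 / (2 * a) + a / 2" for x
  proof -
    have "2 * a * f x \<le> (f x)\<^sup>2 + a\<^sup>2"
      using sum_squares_bound[of "f x" a] by (simp add: power2_eq_square algebra_simps)
    then show ?thesis
      using \<open>0 < a\<close> by (simp add: field_simps power2_eq_square)
  qed
  have bound_eq: "ennreal ((f x)\<^sup>2 / (2 * a) + a / 2)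
      = ennreal (1 / (2 * a)) * ennreal ((f x)\<^sup>2) + ennreal (a / 2)" for x
  proof -
    have "(f x)\<^sup>2 / (2 * a) + a / 2 = 1 / (2 * a) * (f x)\<^sup>2 + a / 2"
      by simp
    also have "ennreal \<dots> = ennreal (1 / (2 * a) * (f x)\<^sup>2) + ennreal (a / 2)"
      using \<open>0 < a\<close> by (intro ennreal_plus) auto
    also have "ennreal (1 / (2 * a) * (f x)\<^sup>2) = ennreal (1 / (2 * a)) * ennreal ((f x)\<^sup>2)"
      using \<open>0 < a\<close> by (intro ennreal_mult) auto
    finally show ?thesis .
  qed
  have "(\<integral>\<^sup>+ x. ennreal (f x) \<partial>M)
      \<le> (\<integral>\<^sup>+ x. ennreal (1 / (2 * a)) * ennreal ((f x)\<^sup>2) + ennreal (a / 2) \<partial>M)"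
    by (intro nn_integral_mono) (simp only: bound_eq[symmetric] ennreal_leI am_gm)
  also have "\<dots> = ennreal (1 / (2 * a)) * (\<integral>\<^sup>+ x. ennreal ((f x)\<^sup>2) \<partial>M) + ennreal (a / 2)"
    using f by (simp add: nn_integral_add nn_integral_cmult emeasure_space_1)
  also have "\<dots> \<le> ennreal (1 / (2 * a)) * ennreal (a\<^sup>2) + ennreal (a / 2)"
    by (intro add_mono mult_left_mono second_moment) auto
  also have "\<dots> = ennreal a"
    using \<open>0 < a\<close> by (simp add: ennreal_mult'[symmetric] ennreal_plus[symmetric] power2_eq_square)
  finally show ?thesis .
qed

lemma nn_integral_pair_fst:
  assumes "prob_space M2" and "h \<in> borel_measurable M1"
  shows "(\<integral>\<^sup>+ p. h (fst p) \<partial>(M1 \<Otimes>\<^sub>M M2)) = integral\<^sup>N M1 h"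
proof -
  interpret M2: prob_space M2 by fact
  have "(\<integral>\<^sup>+ p. h (fst p) \<partial>(M1 \<Otimes>\<^sub>M M2)) = (\<integral>\<^sup>+ x. \<integral>\<^sup>+ y. h x \<partial>M2 \<partial>M1)"
    using assms by (subst M2.nn_integral_fst[symmetric]) auto
  then show ?thesis
    by (simp add: M2.emeasure_space_1)
qed

lemma nn_integral_pair_snd:
  assumes "prob_space M1" and "sigma_finite_measure M2" and "h \<in> borel_measurable M2"
  shows "(\<integral>\<^sup>+ p. h (snd p) \<partial>(M1 \<Otimes>\<^sub>M M2)) = integral\<^sup>N M2 h"
proof -
  interpret M1: prob_space M1 by fact
  interpret M2: sigma_finite_measure M2 by fact
  have "(\<integral>\<^sup>+ p. h (snd p) \<partial>(M1 \<Otimes>\<^sub>M M2)) = (\<integral>\<^sup>+ x. \<integral>\<^sup>+ y. h y \<partial>M2 \<partial>M1)"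
    using assms by (subst M2.nn_integral_fst[symmetric]) auto
  then show ?thesis
    by (simp add: M1.emeasure_space_1)
qed

lemma nn_integral_normal_square:
  assumes "0 < s"
  shows "(\<integral>\<^sup>+ a. ennreal (a\<^sup>2) \<partial>density lborel (normal_density 0 s)) = ennreal (s\<^sup>2)"
proof -
  have "(\<integral>\<^sup>+ a. ennreal (a\<^sup>2) \<partial>density lborel (normal_density 0 s))
      = (\<integral>\<^sup>+ a. ennreal (normal_density 0 s a * (a - 0) ^ (2 * 1)) \<partial>lborel)"
    by (subst nn_integral_density) (auto simp: ennreal_mult[symmetric] intro!: nn_integral_cong)
  also have "\<dots> = ennreal (\<integral>a. normal_density 0 s a * (a - 0) ^ (2 * 1) \<partial>lborel)"
  proof (rule nn_integral_eq_integral)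
    show "integrable lborel (\<lambda>a. normal_density 0 s a * (a - 0) ^ (2 * 1))"
      using integrable_normal_moment[of s 0 2] assms by (simp only: mult_1_right)
  qed auto
  also have "(\<integral>a. normal_density 0 s a * (a - 0) ^ (2 * 1) \<partial>lborel) = s\<^sup>2"
    using assms by (subst integral_normal_moment_even) (auto simp: numeral_2_eq_2)
  finally show ?thesis .
qed

lemma measurable_Complex_pair:
  assumes "sets M1 = sets borel" and "sets M2 = sets borel"
  shows "(\<lambda>(a, b). Complex a b) \<in> borel_measurable (M1 \<Otimes>\<^sub>M M2)"
proof -
  have "(\<lambda>(a, b). Complex a b) = (\<lambda>p. complex_of_real (fst p) + \<i> * complex_of_real (snd p))"
    by (auto simp: Complex_eq)
  moreover have "sets (M1 \<Otimes>\<^sub>M M2) = sets (borel \<Otimes>\<^sub>M borel)"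
    using assms by (intro sets_pair_measure_cong)
  ultimately show ?thesis
    by (simp cong: measurable_cong_sets)
qed

lemma sets_cgauss [measurable_cong]: "sets (cgauss v) = sets borel"
  unfolding cgauss_def by simp

lemma prob_space_cgauss: "0 < v \<Longrightarrow> prob_space (cgauss v)"
  unfolding cgauss_def
  by (intro prob_space.prob_space_distr prob_space_pair prob_space_normal_density
      measurable_Complex_pair) auto

lemma nn_integral_cgauss_Re_square:
  assumes "0 < v"
  shows "(\<integral>\<^sup>+ z. ennreal ((Re z)\<^sup>2) \<partial>cgauss v) = ennreal (v / 2)"
proof -
  let ?N = "density lborel (normal_density 0 (sqrt (v / 2)))"
  have "(\<integral>\<^sup>+ z. ennreal ((Re z)\<^sup>2) \<partial>cgauss v) = (\<integral>\<^sup>+ p. ennreal ((fst p)\<^sup>2) \<partial>(?N \<Otimes>\<^sub>M ?N))"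
    unfolding cgauss_def
    by (subst nn_integral_distr) (auto intro!: nn_integral_cong measurable_Complex_pair simp: split_beta)
  also have "\<dots> = (\<integral>\<^sup>+ a. ennreal (a\<^sup>2) \<partial>?N)"
    using assms by (intro nn_integral_pair_fst prob_space_normal_density) auto
  also have "\<dots> = ennreal (v / 2)"
    using assms by (subst nn_integral_normal_square) auto
  finally show ?thesis .
qed

lemma prob_space_ginibre: "prob_space ginibre"
  unfolding ginibre_def by (intro prob_space_PiM prob_space_cgauss) auto

lemma measurable_ginibre_entry [measurable]:
  fixes d :: "'n::finite \<times> 'n"
  shows "(\<lambda>G. G d) \<in> borel_measurable (ginibre :: ('n \<times> 'n \<Rightarrow> complex) measure)"
proof -
  have "(\<lambda>G. G d) \<in> ginibre \<rightarrow>\<^sub>M cgauss (1 / real CARD('n))"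
    unfolding ginibre_def by (rule measurable_component_singleton) simp
  then show ?thesis
    by (simp add: measurable_cong_sets[OF refl sets_cgauss])
qed

lemma nn_integral_ginibre_entry:
  fixes d :: "'n::finite \<times> 'n"
  assumes "f \<in> borel_measurable borel"
  shows "(\<integral>\<^sup>+ G. f (G d) \<partial>ginibre) = (\<integral>\<^sup>+ z. f z \<partial>cgauss (1 / real CARD('n)))"
proof -
  have "cgauss (1 / real CARD('n)) = distr ginibre (cgauss (1 / real CARD('n))) (\<lambda>G. G d)"
    unfolding ginibre_def by (intro distr_PiM_component[symmetric] prob_space_cgauss) auto
  also have "(\<integral>\<^sup>+ z. f z \<partial>\<dots>) = (\<integral>\<^sup>+ G. f (G d) \<partial>ginibre)"
    using assms by (intro nn_integral_distr) (simp_all add: measurable_cong_sets[OF refl sets_cgauss]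
        measurable_cong_sets[OF sets_cgauss refl])
  finally show ?thesis ..
qed

lemma measurable_matrix_entry [measurable]:
  "(\<lambda>A. A i j) \<in> borel_measurable (matrix_space :: ('n::finite \<Rightarrow> 'n \<Rightarrow> complex) measure)"
proof -
  have "(\<lambda>A. A i) \<in> (matrix_space :: ('n \<Rightarrow> 'n \<Rightarrow> complex) measure) \<rightarrow>\<^sub>M PiM UNIV (\<lambda>_. borel)"
    unfolding matrix_space_def by (rule measurable_component_singleton) simp
  moreover have "(\<lambda>B. B j) \<in> (PiM UNIV (\<lambda>_. borel) :: ('n \<Rightarrow> complex) measure) \<rightarrow>\<^sub>M borel"
    by (rule measurable_component_singleton) simp
  ultimately show ?thesis
    by (rule measurable_compose)
qed

lemma measurable_gue_of: "gue_of \<in> (ginibre :: ('n::finite \<times> 'n \<Rightarrow> complex) measure) \<rightarrow>\<^sub>M matrix_space"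
  unfolding matrix_space_def
proof (intro measurable_PiM_single')
  fix i j :: 'n
  show "(\<lambda>G. gue_of G i j) \<in> borel_measurable ginibre"
    unfolding gue_of_def
    by (intro borel_measurable_divide borel_measurable_add measurable_const measurable_ginibre_entry
        borel_measurable_continuous_on[where f = cnj] continuous_intros) simp
qed (auto simp: space_PiM)

lemma sets_GUE [measurable_cong]: "sets GUE = sets matrix_space"
  unfolding GUE_def by simp

lemma prob_space_GUE: "prob_space GUE"
  unfolding GUE_def by (intro prob_space.prob_space_distr prob_space_ginibre measurable_gue_of)

lemma nn_integral_GUE_pair:
  assumes "f \<in> borel_measurable (matrix_space \<Otimes>\<^sub>M matrix_space)"
  shows "(\<integral>\<^sup>+ p. f p \<partial>(GUE \<Otimes>\<^sub>M GUE))
    = (\<integral>\<^sup>+ q. f (gue_of (fst q), gue_of (snd q)) \<partial>(ginibre \<Otimes>\<^sub>M ginibre))"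
proof -
  have pair_gue_of: "(\<lambda>(G, H). (gue_of G, gue_of H))
      \<in> ginibre \<Otimes>\<^sub>M ginibre \<rightarrow>\<^sub>M matrix_space \<Otimes>\<^sub>M matrix_space"
    unfolding split_beta'
    by (intro measurable_Pair measurable_compose[OF measurable_fst measurable_gue_of]
        measurable_compose[OF measurable_snd measurable_gue_of])
  have GUE_pair: "GUE \<Otimes>\<^sub>M GUE
      = distr (ginibre \<Otimes>\<^sub>M ginibre) (matrix_space \<Otimes>\<^sub>M matrix_space) (\<lambda>(G, H). (gue_of G, gue_of H))"
    unfolding GUE_def
    using prob_space_GUE[unfolded GUE_def]
    by (intro pair_measure_distr measurable_gue_of prob_space_imp_sigma_finite)
  show ?thesis
    unfolding GUE_pair using nn_integral_distr[OF pair_gue_of, of f] assms by (simp add: split_beta')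
qed

lemma gue_of_diag: "gue_of G i i = complex_of_real (sqrt 2 * Re (G (i, i)))"
proof -
  have "gue_of G i i = complex_of_real (2 * Re (G (i, i)) / sqrt 2)"
    by (simp add: gue_of_def complex_add_cnj)
  also have "2 * Re (G (i, i)) / sqrt 2 = sqrt 2 * Re (G (i, i))"
    by (simp add: field_simps)
  finally show ?thesis .
qed

lemma nn_integral_gue_of_diag_square:
  "(\<integral>\<^sup>+ G. ennreal ((cmod (gue_of G i i))\<^sup>2) \<partial>(ginibre :: ('n::finite \<times> 'n \<Rightarrow> complex) measure))
    = ennreal (1 / real CARD('n))"
proof -
  have "(\<integral>\<^sup>+ G. ennreal ((cmod (gue_of G i i))\<^sup>2) \<partial>(ginibre :: ('n \<times> 'n \<Rightarrow> complex) measure))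
      = (\<integral>\<^sup>+ G. 2 * ennreal ((Re (G (i, i)))\<^sup>2) \<partial>ginibre)"
  proof (intro nn_integral_cong)
    fix G :: "'n \<times> 'n \<Rightarrow> complex"
    have "(cmod (gue_of G i i))\<^sup>2 = 2 * (Re (G (i, i)))\<^sup>2"
      by (simp add: gue_of_diag norm_mult power_mult_distrib)
    then show "ennreal ((cmod (gue_of G i i))\<^sup>2) = 2 * ennreal ((Re (G (i, i)))\<^sup>2)"
      by (simp add: ennreal_mult')
  qed
  also have "\<dots> = 2 * (\<integral>\<^sup>+ z. ennreal ((Re z)\<^sup>2) \<partial>cgauss (1 / real CARD('n)))"
    by (simp add: nn_integral_cmult nn_integral_ginibre_entry[where f = "\<lambda>z. ennreal ((Re z)\<^sup>2)"])
  also have "\<dots> = ennreal (1 / real CARD('n))"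
    using ennreal_mult[of 2 "1 / real CARD('n) / 2"] by (simp add: nn_integral_cgauss_Re_square)
  finally show ?thesis .
qed

lemma GUE_pair_diag_second_moment:
  "(\<integral>\<^sup>+ p. ennreal ((cmod (fst p i i + \<i> * snd p i i))\<^sup>2)
      \<partial>((GUE :: ('n::finite \<Rightarrow> 'n \<Rightarrow> complex) measure) \<Otimes>\<^sub>M GUE))
    = ennreal (2 / real CARD('n))"
proof -
  let ?P = "ginibre \<Otimes>\<^sub>M ginibre :: (('n \<times> 'n \<Rightarrow> complex) \<times> ('n \<times> 'n \<Rightarrow> complex)) measure"
  let ?m = "\<lambda>G :: 'n \<times> 'n \<Rightarrow> complex. ennreal ((cmod (gue_of G i i))\<^sup>2)"
  have [measurable]: "(\<lambda>G. gue_of G i i) \<in> borel_measurable (ginibre :: ('n \<times> 'n \<Rightarrow> complex) measure)"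
    by (rule measurable_compose[OF measurable_gue_of measurable_matrix_entry])
  then have m: "?m \<in> borel_measurable ginibre"
    by measurable
  have diag_norm: "(cmod (gue_of G i i + \<i> * gue_of H i i))\<^sup>2
      = (cmod (gue_of G i i))\<^sup>2 + (cmod (gue_of H i i))\<^sup>2" for G H :: "'n \<times> 'n \<Rightarrow> complex"
  proof -
    have "(cmod (complex_of_real a + \<i> * complex_of_real b))\<^sup>2 = (cmod a)\<^sup>2 + (cmod b)\<^sup>2" for a b
      by (simp add: Complex_eq[symmetric] complex_norm)
    then show ?thesis
      unfolding gue_of_diag by (simp only: norm_of_real)
  qed
  have "(\<integral>\<^sup>+ p. ennreal ((cmod (fst p i i + \<i> * snd p i i))\<^sup>2) \<partial>(GUE \<Otimes>\<^sub>M GUE))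
      = (\<integral>\<^sup>+ q. ?m (fst q) + ?m (snd q) \<partial>?P)"
    by (subst nn_integral_GUE_pair) (auto simp: diag_norm ennreal_plus intro!: nn_integral_cong)
  also have "\<dots> = (\<integral>\<^sup>+ q. ?m (fst q) \<partial>?P) + (\<integral>\<^sup>+ q. ?m (snd q) \<partial>?P)"
    by (intro nn_integral_add measurable_compose[OF measurable_fst m] measurable_compose[OF measurable_snd m])
  also have "(\<integral>\<^sup>+ q. ?m (fst q) \<partial>?P) = integral\<^sup>N ginibre ?m"
    by (rule nn_integral_pair_fst[OF prob_space_ginibre m])
  also have "(\<integral>\<^sup>+ q. ?m (snd q) \<partial>?P) = integral\<^sup>N ginibre ?m"
    by (rule nn_integral_pair_snd[OF prob_space_ginibre prob_space_imp_sigma_finite[OF prob_space_ginibre] m])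
  also have "integral\<^sup>N ginibre ?m + integral\<^sup>N ginibre ?m = ennreal (2 / real CARD('n))"
    by (simp add: nn_integral_gue_of_diag_square ennreal_plus[symmetric])
  finally show ?thesis .
qed

lemma gamma_fov_le_diag: "gamma_fov A B \<le> cmod (A i i + \<i> * B i i)"
proof -
  define e :: "'a::finite \<Rightarrow> complex" where "e = (\<lambda>j. if j = i then 1 else 0)"
  have "(cmod (e j))\<^sup>2 = (if j = i then 1 else 0)" for j
    by (simp add: e_def)
  then have "(\<Sum>j\<in>UNIV. (cmod (e j))\<^sup>2) = 1"
    by simp
  moreover have "cnj (e j) * (A j k + \<i> * B j k) * e k
      = (if k = i then if j = i then A i i + \<i> * B i i else 0 else 0)" for j k
    by (simp add: e_def)
  then have "(\<Sum>j\<in>UNIV. \<Sum>k\<in>UNIV. cnj (e j) * (A j k + \<i> * B j k) * e k) = A i i + \<i> * B i i"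
    by simp
  ultimately show ?thesis
    unfolding gamma_fov_def by (intro cINF_lower2[where x = e] bdd_belowI[where m = 0]) auto
qed

theorem corollary3p13:
  shows "(\<integral>\<^sup>+ p. ennreal (gamma_fov (fst p) (snd p))
            \<partial>((GUE :: ('n::finite \<Rightarrow> 'n \<Rightarrow> complex) measure) \<Otimes>\<^sub>M GUE))
         \<le> ennreal (sqrt (pi / real CARD('n)))"
proof -
  fix i :: 'n
  have "(\<integral>\<^sup>+ p. ennreal (gamma_fov (fst p) (snd p))
        \<partial>((GUE :: ('n \<Rightarrow> 'n \<Rightarrow> complex) measure) \<Otimes>\<^sub>M GUE))
      \<le> (\<integral>\<^sup>+ p. ennreal (cmod (fst p i i + \<i> * snd p i i)) \<partial>(GUE \<Otimes>\<^sub>M GUE))"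
    by (intro nn_integral_mono ennreal_leI gamma_fov_le_diag)
  also have "\<dots> \<le> ennreal (sqrt (2 / real CARD('n)))"
  proof (rule nn_integral_le_of_second_moment)
    show "prob_space ((GUE :: ('n \<Rightarrow> 'n \<Rightarrow> complex) measure) \<Otimes>\<^sub>M GUE)"
      by (intro prob_space_pair prob_space_GUE)
    show "(\<integral>\<^sup>+ p. ennreal ((cmod (fst p i i + \<i> * snd p i i))\<^sup>2) \<partial>(GUE \<Otimes>\<^sub>M GUE))
        \<le> ennreal ((sqrt (2 / real CARD('n)))\<^sup>2)"
      by (simp add: GUE_pair_diag_second_moment)
  qed auto
  also have "\<dots> \<le> ennreal (sqrt (pi / real CARD('n)))"
    using pi_gt3 by (intro ennreal_leI real_sqrt_le_mono divide_right_mono) auto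
  finally show ?thesis .
qed

end
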